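(* Let $b\ge1$, let $c_{\mathrm{ov}}\ge0$, $c_i>0$ and $c_i^\sharp\ge0$ for $i\in[b]$, and let $L^0_{i,\{s,\dots,b\}}>0$ ($1\le s\le i\le b$) be the layer-wise smoothness constants described in the context. For a probability vector $p=(p_1,\dots,p_b)$ (nonnegative entries summing to $1$) define the cost $$C(p)=\frac{c_{\mathrm{ov}}+\sum_{i=1}^b(c_i+c_i^\sharp)\sum_{s=1}^ip_s}{\min_{i\in[b]}\left[\sum_{s=1}^i\frac{p_s}{2L^0_{i,\{s,\dots,b\}}}\right]}.$$ Then $C$ is minimized over probability vectors by $p=(1,0,\dots,0)$ if and only if $$L^0_{1,\{1,\dots,b\}}=\max_{i\in[b]}L^0_{i,\{1,\dots,b\}}.$$
   Context: Setting: $\mathcal X=\mathcal X_1\times\cdots\times\mathcal X_b$, $\mathcal X_i=\mathbb R^{m_i\times n_i}$ with norms $\|\cdot\|_{(i)}$, and $f:\mathcal X\to\mathbb R$ continuously differentiable. The constants $L^0_{i,\{s,\dots,b\}}$ are the smallest constants such that, for each $s\in[b]$, all $X$ and all $\Gamma$ with $\Gamma_j=0$ for $j<s$, $f(X+\Gamma)-f(X)-\langle\nabla f(X),\Gamma\rangle\le\sum_{i\ge s}\frac{L^0_{i,\{s,\dots,b\}}}{2}\|\Gamma_i\|_{(i)}^2$ (layer-wise smoothness for the randomized progressive training supports $\{s,\dots,b\}$). The quantity $C(p)$ is (proportional to) the expected total compute cost of reaching an $\varepsilon$-stationary point with randomized progressive training, where layer $s$ is chosen as the smallest updated layer with probability $p_s$;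 $C(p)=+\infty$ when the denominator vanishes. *)

theory Defs
  imports "HOL-Analysis.Analysis"
begin

text \<open>The space X = X_1 x ... x X_b (X_i = R^(m_i x n_i) with Frobenius inner product)
  is represented as real^'k for a finite coordinate type 'k, together with a block
  assignment blk :: 'k => nat (coordinate k belongs to block blk k).\<close>

definition blockpart :: "('k::finite \<Rightarrow> nat) \<Rightarrow> nat \<Rightarrow> real^'k \<Rightarrow> real^'k" where
  "blockpart blk i G = (\<chi> k. if blk k = i then G $ k else 0)"

definition block_space :: "('k::finite \<Rightarrow> nat) \<Rightarrow> nat \<Rightarrow> (real^'k) set" where
  "block_space blk i = {v. \<forall>k. blk k \<noteq> i \<longrightarrow> v $ k = 0}"

definition is_block_norm :: "('k::finite \<Rightarrow> nat) \<Rightarrow> nat \<Rightarrow> (real^'k \<Rightarrow> real) \<Rightarrow> bool" where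
  "is_block_norm blk i N \<longleftrightarrow>
     (\<forall>v\<in>block_space blk i. N v \<ge> 0 \<and> (N v = 0 \<longleftrightarrow> v = 0)) \<and>
     (\<forall>v\<in>block_space blk i. \<forall>a::real. N (a *\<^sub>R v) = \<bar>a\<bar> * N v) \<and>
     (\<forall>v\<in>block_space blk i. \<forall>w\<in>block_space blk i. N (v + w) \<le> N v + N w)"

definition valid_smooth ::
  "(real^'k \<Rightarrow> real) \<Rightarrow> (real^'k \<Rightarrow> real^'k) \<Rightarrow> ('k::finite \<Rightarrow> nat) \<Rightarrow> (nat \<Rightarrow> real^'k \<Rightarrow> real)
   \<Rightarrow> nat \<Rightarrow> nat \<Rightarrow> (nat \<Rightarrow> real) \<Rightarrow> bool" where
  "valid_smooth f g blk N b s Lt \<longleftrightarrow>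
     (\<forall>X G. (\<forall>k. blk k < s \<longrightarrow> G $ k = 0) \<longrightarrow>
        f (X + G) - f X - g X \<bullet> G \<le> (\<Sum>i\<in>{s..b}. Lt i / 2 * (N i (blockpart blk i G))\<^sup>2))"

text \<open>L i s = L^0_{i,{s,...,b}}: for every s, the tuple (L i s)_{i>=s} is valid and is the
  smallest (componentwise least) valid tuple.\<close>
definition layer_smoothness_consts ::
  "(real^'k \<Rightarrow> real) \<Rightarrow> (real^'k \<Rightarrow> real^'k) \<Rightarrow> ('k::finite \<Rightarrow> nat) \<Rightarrow> (nat \<Rightarrow> real^'k \<Rightarrow> real)
   \<Rightarrow> nat \<Rightarrow> (nat \<Rightarrow> nat \<Rightarrow> real) \<Rightarrow> bool" where
  "layer_smoothness_consts f g blk N b L \<longleftrightarrow>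
     (\<forall>s\<in>{1..b}. valid_smooth f g blk N b s (\<lambda>i. L i s) \<and>
        (\<forall>Lt. valid_smooth f g blk N b s Lt \<longrightarrow> (\<forall>i\<in>{s..b}. L i s \<le> Lt i)))"

definition prob_vec :: "nat \<Rightarrow> (nat \<Rightarrow> real) \<Rightarrow> bool" where
  "prob_vec b p \<longleftrightarrow> (\<forall>s\<in>{1..b}. p s \<ge> 0) \<and> (\<Sum>s=1..b. p s) = 1"

definition cost_den :: "nat \<Rightarrow> (nat \<Rightarrow> nat \<Rightarrow> real) \<Rightarrow> (nat \<Rightarrow> real) \<Rightarrow> real" where
  "cost_den b L p = Min ((\<lambda>i. \<Sum>s=1..i. p s / (2 * L i s)) ` {1..b})"

definition cost_num :: "nat \<Rightarrow> real \<Rightarrow> (nat \<Rightarrow> real) \<Rightarrow> (nat \<Rightarrow> real) \<Rightarrow> (nat \<Rightarrow> real) \<Rightarrow> real" where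
  "cost_num b cov c csh p = cov + (\<Sum>i=1..b. (c i + csh i) * (\<Sum>s=1..i. p s))"

definition cost :: "nat \<Rightarrow> real \<Rightarrow> (nat \<Rightarrow> real) \<Rightarrow> (nat \<Rightarrow> real) \<Rightarrow> (nat \<Rightarrow> nat \<Rightarrow> real)
   \<Rightarrow> (nat \<Rightarrow> real) \<Rightarrow> ereal" where
  "cost b cov c csh L p =
     (if cost_den b L p = 0 then \<infinity> else ereal (cost_num b cov c csh p / cost_den b L p))"

end

theory Submission
  imports Defs
begin

text \<open>
  Write \<open>A = cov + \<Sum>\<^sub>i (c i + csh i)\<close> and \<open>M = max\<^sub>i L i 1\<close>; the cost of the
  vector \<open>e\<^sub>1\<close> that always trains the whole network is \<open>2 M A\<close>.
  For any \<open>p\<close>, the numerator of \<open>C(p)\<close> is at least \<open>p 1 A\<close> and the denominator at most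
  \<open>p 1 / (2 L 1 1)\<close>, so \<open>C(p) \<ge> 2 L 1 1 A\<close>: this settles the case \<open>L 1 1 = M\<close>.
  If \<open>L 1 1 < M\<close>, move the mass \<open>1 - L 1 1 / M\<close> of \<open>e\<^sub>1\<close> to layer 2.  Since dropping the
  first block from the support can only decrease the minimal smoothness constants,
  \<open>L i 2 \<le> L i 1 \<le> M\<close>, so the denominator stays at least \<open>1 / (2 M)\<close> while the numerator
  strictly decreases.  Only the minimality of the constants enters.
\<close>

definition first_layer :: "nat \<Rightarrow> real" where
  "first_layer = (\<lambda>s. if s = 1 then 1 else 0)"

definition first_two_layers :: "real \<Rightarrow> nat \<Rightarrow> real" where
  "first_two_layers q = (\<lambda>s. if s = 1 then q else if s = 2 then 1 - q else 0)"

lemma is_block_norm_zero: "is_block_norm blk i N \<Longrightarrow> N 0 = 0"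
  unfolding is_block_norm_def block_space_def by auto

lemma blockpart_eq_0:
  assumes "\<forall>k. blk k = i \<longrightarrow> G $ k = 0"
  shows "blockpart blk i G = 0"
  using assms unfolding blockpart_def by (auto simp: vec_eq_iff)

lemma valid_smooth_Suc:
  fixes blk :: "'k::finite \<Rightarrow> nat"
  assumes valid: "valid_smooth f g blk N b s Lt" and "s \<le> b" and "N s 0 = 0"
  shows "valid_smooth f g blk N b (Suc s) Lt"
  unfolding valid_smooth_def
proof (intro allI impI)
  fix X G :: "real^'k" assume G: "\<forall>k. blk k < Suc s \<longrightarrow> G $ k = 0"
  then have "N s (blockpart blk s G) = 0"
    using \<open>N s 0 = 0\<close> blockpart_eq_0[of blk s G] by simp
  then have "(\<Sum>i\<in>{s..b}. Lt i / 2 * (N i (blockpart blk i G))\<^sup>2)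
      = (\<Sum>i\<in>{Suc s..b}. Lt i / 2 * (N i (blockpart blk i G))\<^sup>2)"
    unfolding sum.atLeast_Suc_atMost[OF \<open>s \<le> b\<close>] by simp
  moreover have "f (X + G) - f X - g X \<bullet> G \<le> (\<Sum>i\<in>{s..b}. Lt i / 2 * (N i (blockpart blk i G))\<^sup>2)"
    using valid G unfolding valid_smooth_def by auto
  ultimately show "f (X + G) - f X - g X \<bullet> G
      \<le> (\<Sum>i\<in>{Suc s..b}. Lt i / 2 * (N i (blockpart blk i G))\<^sup>2)"
    by simp
qed

lemma layer_smoothness_consts_antimono:
  assumes L: "layer_smoothness_consts f g blk N b L" and "1 \<le> s" "s < b"
    and "is_block_norm blk s (N s)" and "i \<in> {Suc s..b}"
  shows "L i (Suc s) \<le> L i s"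
proof -
  have "valid_smooth f g blk N b s (\<lambda>i. L i s)"
    using L assms(2,3) unfolding layer_smoothness_consts_def by auto
  then have "valid_smooth f g blk N b (Suc s) (\<lambda>i. L i s)"
    using valid_smooth_Suc[of f g blk N b s] is_block_norm_zero[OF assms(4)] assms(3) by simp
  moreover have "Suc s \<in> {1..b}" using \<open>s < b\<close> by simp
  ultimately show ?thesis
    using L \<open>i \<in> {Suc s..b}\<close> unfolding layer_smoothness_consts_def by blast
qed

lemma sum_first_two_layers:
  assumes "2 \<le> i"
  shows "(\<Sum>s=1..i. first_two_layers q s * h s) = q * h 1 + (1 - q) * h 2"
proof -
  have "(\<Sum>s=1..i. first_two_layers q s * h s) = (\<Sum>s\<in>{1,2}. first_two_layers q s * h s)"
    using assms by (intro sum.mono_neutral_right) (auto simp: first_two_layers_def)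
  then show ?thesis by (simp add: first_two_layers_def)
qed

lemma prob_vec_first_two_layers:
  "2 \<le> b \<Longrightarrow> 0 \<le> q \<Longrightarrow> q \<le> 1 \<Longrightarrow> prob_vec b (first_two_layers q)"
  using sum_first_two_layers[of b q "\<lambda>_. 1"]
  unfolding prob_vec_def by (auto simp: first_two_layers_def)

lemma cost_first_layer:
  assumes "1 \<le> b" and L1_pos: "\<forall>i\<in>{1..b}. L i 1 > 0"
  shows "cost b cov c csh L first_layer
    = ereal (2 * Max ((\<lambda>i. L i 1) ` {1..b}) * (cov + (\<Sum>i=1..b. c i + csh i)))"
proof -
  define M where "M = Max ((\<lambda>i. L i 1) ` {1..b})"
  have prefix: "(\<Sum>s=1..i. first_layer s * h s) = h 1" if "1 \<le> i" for i and h :: "nat \<Rightarrow> real"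
    using that by (subst sum.atLeast_Suc_atMost) (auto simp: first_layer_def)
  have num: "cost_num b cov c csh first_layer = cov + (\<Sum>i=1..b. c i + csh i)"
    unfolding cost_num_def using prefix[of _ "\<lambda>_. 1"] by simp
  have "M \<in> (\<lambda>i. L i 1) ` {1..b}"
    unfolding M_def using \<open>1 \<le> b\<close> by (intro Max_in) auto
  then have M_pos: "M > 0" using L1_pos by auto
  have den: "cost_den b L first_layer = 1 / (2 * M)"
    unfolding cost_den_def
  proof (rule Min_eqI)
    have "(\<Sum>s=1..i. first_layer s / (2 * L i s)) = 1 / (2 * L i 1)" if "1 \<le> i" for i
      using prefix[OF that, of "\<lambda>s. 1 / (2 * L i s)"] by simp
    then have image: "(\<lambda>i. \<Sum>s=1..i. first_layer s / (2 * L i s)) ` {1..b}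
        = (\<lambda>i. 1 / (2 * L i 1)) ` {1..b}"
      by (intro image_cong) auto
    show "1 / (2 * M) \<le> y" if "y \<in> (\<lambda>i. \<Sum>s=1..i. first_layer s / (2 * L i s)) ` {1..b}" for y
      using that L1_pos unfolding image M_def by (auto intro!: frac_le Max_ge)
    show "1 / (2 * M) \<in> (\<lambda>i. \<Sum>s=1..i. first_layer s / (2 * L i s)) ` {1..b}"
      unfolding image using \<open>M \<in> _\<close> by auto
  qed simp
  show ?thesis
    unfolding cost_def num den M_def[symmetric] using M_pos by simp
qed

lemma cost_den_le_first: "1 \<le> b \<Longrightarrow> cost_den b L p \<le> p 1 / (2 * L 1 1)"
  unfolding cost_den_def by (intro Min_le) (auto intro!: image_eqI[where x=1])

lemma cost_den_nonneg:
  assumes "1 \<le> b" "prob_vec b p" "\<forall>i\<in>{1..b}. \<forall>s\<in>{1..i}. L i s > 0"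
  shows "0 \<le> cost_den b L p"
  unfolding cost_den_def using assms
  by (intro Min.boundedI) (auto simp: prob_vec_def intro!: sum_nonneg divide_nonneg_pos)

lemma cost_num_ge_first:
  assumes p: "prob_vec b p" and "0 \<le> cov" and A_nonneg: "\<forall>i\<in>{1..b}. 0 \<le> c i + csh i"
  shows "p 1 * (cov + (\<Sum>i=1..b. c i + csh i)) \<le> cost_num b cov c csh p"
proof -
  have "1 \<le> b" using p by (cases b) (auto simp: prob_vec_def)
  have p_nonneg: "\<forall>s\<in>{1..b}. 0 \<le> p s" using p by (simp add: prob_vec_def)
  have prefix_ge: "p 1 \<le> (\<Sum>s=1..i. p s)" if "i \<in> {1..b}" for i
    using that p_nonneg by (intro member_le_sum) auto
  have "p 1 * (\<Sum>i=1..b. c i + csh i) = (\<Sum>i=1..b. (c i + csh i) * p 1)"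
    by (simp add: sum_distrib_left mult.commute)
  also have "\<dots> \<le> (\<Sum>i=1..b. (c i + csh i) * (\<Sum>s=1..i. p s))"
    using prefix_ge A_nonneg by (intro sum_mono mult_left_mono) auto
  finally have "p 1 * (\<Sum>i=1..b. c i + csh i) \<le> (\<Sum>i=1..b. (c i + csh i) * (\<Sum>s=1..i. p s))" .
  moreover have "p 1 \<le> (\<Sum>s=1..b. p s)" using \<open>1 \<le> b\<close> by (intro prefix_ge) simp
  then have "p 1 * cov \<le> cov"
    using p \<open>0 \<le> cov\<close> p_nonneg \<open>1 \<le> b\<close> by (simp add: prob_vec_def mult_left_le_one_le)
  ultimately show ?thesis unfolding cost_num_def by (simp add: distrib_left)
qed

lemma first_layer_cost_le:
  assumes "1 \<le> b" and L_pos: "\<forall>i\<in>{1..b}. \<forall>s\<in>{1..i}. L i s > 0"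
    and L11_max: "L 1 1 = Max ((\<lambda>i. L i 1) ` {1..b})"
    and "0 \<le> cov" and A_nonneg: "\<forall>i\<in>{1..b}. 0 \<le> c i + csh i" and p: "prob_vec b p"
  shows "cost b cov c csh L first_layer \<le> cost b cov c csh L p"
proof (cases "cost_den b L p = 0")
  case True
  then show ?thesis by (simp add: cost_def)
next
  case False
  define A where "A = cov + (\<Sum>i=1..b. c i + csh i)"
  have L11_pos: "L 1 1 > 0" using L_pos \<open>1 \<le> b\<close> by auto
  have den_pos: "0 < cost_den b L p"
    using False cost_den_nonneg[OF \<open>1 \<le> b\<close> p L_pos] by simp
  have den_le: "cost_den b L p \<le> p 1 / (2 * L 1 1)"
    using cost_den_le_first[OF \<open>1 \<le> b\<close>] .
  then have "0 < p 1 / (2 * L 1 1)" using den_pos by linarith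
  then have p1_pos: "0 < p 1" using L11_pos by (simp add: zero_less_divide_iff)
  have "0 \<le> A" unfolding A_def using \<open>0 \<le> cov\<close> sum_nonneg[of "{1..b}" "\<lambda>i. c i + csh i"] A_nonneg by auto
  have "2 * L 1 1 * A = p 1 * A / (p 1 / (2 * L 1 1))"
    using p1_pos by simp
  also have "\<dots> \<le> p 1 * A / cost_den b L p"
    using den_pos den_le p1_pos L11_pos \<open>0 \<le> A\<close> by (intro divide_left_mono) auto
  also have "\<dots> \<le> cost_num b cov c csh p / cost_den b L p"
    using cost_num_ge_first[OF p \<open>0 \<le> cov\<close> A_nonneg] den_pos
    unfolding A_def by (intro divide_right_mono) auto
  finally show ?thesis
    using cost_first_layer[of b L cov c csh] \<open>1 \<le> b\<close> L_pos False
    unfolding cost_def L11_max[symmetric] A_def by auto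
qed

lemma cost_den_first_two_layers_ge:
  assumes L_pos: "\<forall>i\<in>{1..b}. \<forall>s\<in>{1..i}. L i s > 0"
    and L_antimono: "\<forall>i\<in>{2..b}. L i 2 \<le> L i 1" and M_ge: "\<forall>i\<in>{1..b}. L i 1 \<le> M"
    and "1 \<le> b" "0 \<le> q" "q \<le> 1" "L 1 1 \<le> q * M"
  shows "1 / (2 * M) \<le> cost_den b L (first_two_layers q)"
  unfolding cost_den_def
proof (rule Min.boundedI)
  have L11_pos: "0 < L 1 1" using L_pos \<open>1 \<le> b\<close> by auto
  then have "0 < M" using M_ge \<open>1 \<le> b\<close> by force
  fix y assume "y \<in> (\<lambda>i. \<Sum>s=1..i. first_two_layers q s / (2 * L i s)) ` {1..b}"
  then obtain i where i: "i \<in> {1..b}" and y: "y = (\<Sum>s=1..i. first_two_layers q s / (2 * L i s))"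
    by auto
  show "1 / (2 * M) \<le> y"
  proof (cases "i = 1")
    case True
    then have y1: "y = q / (2 * L 1 1)" using y by (simp add: first_two_layers_def)
    have "1 / (2 * M) = (L 1 1 / M) / (2 * L 1 1)" using L11_pos by simp
    also have "\<dots> \<le> q / (2 * L 1 1)"
      using \<open>L 1 1 \<le> q * M\<close> L11_pos \<open>0 < M\<close> by (intro divide_right_mono) (auto simp: divide_le_eq)
    finally show ?thesis using y1 by simp
  next
    case False
    then have "2 \<le> i" using i by simp
    then have "y = q / (2 * L i 1) + (1 - q) / (2 * L i 2)"
      using y sum_first_two_layers[of i q "\<lambda>s. 1 / (2 * L i s)"] by simp
    moreover have "q / (2 * M) \<le> q / (2 * L i 1)"
      using \<open>0 \<le> q\<close> \<open>0 < M\<close> M_ge L_pos i by (intro divide_left_mono) auto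
    moreover have "L i 2 \<le> M"
      using L_antimono M_ge i \<open>2 \<le> i\<close> by (meson atLeastAtMost_iff order_trans)
    then have "(1 - q) / (2 * M) \<le> (1 - q) / (2 * L i 2)"
      using \<open>q \<le> 1\<close> \<open>2 \<le> i\<close> \<open>0 < M\<close> L_pos i by (intro divide_left_mono) auto
    moreover have "1 / (2 * M) = q / (2 * M) + (1 - q) / (2 * M)"
      by (simp add: add_divide_distrib[symmetric])
    ultimately show ?thesis by linarith
  qed
qed (use \<open>1 \<le> b\<close> in auto)

lemma cost_num_first_two_layers:
  assumes "1 \<le> b"
  shows "cost_num b cov c csh (first_two_layers q)
    = cov + (\<Sum>i=1..b. c i + csh i) - (1 - q) * (c 1 + csh 1)"
proof -
  have prefix: "(\<Sum>s=1..i. first_two_layers q s) = (if i = 1 then q else 1)" if "1 \<le> i" for i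
    using that sum_first_two_layers[of i q "\<lambda>_. 1"]
    by (cases "i = 1") (auto simp: first_two_layers_def)
  have "(c i + csh i) * (\<Sum>s=1..i. first_two_layers q s)
      = (c i + csh i) - (if i = 1 then (1 - q) * (c 1 + csh 1) else 0)" if "1 \<le> i" for i
    using prefix[OF that] by (simp add: algebra_simps)
  then have "(\<Sum>i=1..b. (c i + csh i) * (\<Sum>s=1..i. first_two_layers q s))
      = (\<Sum>i=1..b. (c i + csh i) - (if i = 1 then (1 - q) * (c 1 + csh 1) else 0))"
    by (intro sum.cong) auto
  also have "\<dots> = (\<Sum>i=1..b. c i + csh i) - (if 1 \<le> b then (1 - q) * (c 1 + csh 1) else 0)"
    by (simp add: sum_subtractf)
  finally show ?thesis
    unfolding cost_num_def using assms by simp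
qed

lemma exists_cost_less_first_layer:
  assumes "2 \<le> b" and L_pos: "\<forall>i\<in>{1..b}. \<forall>s\<in>{1..i}. L i s > 0"
    and L_antimono: "\<forall>i\<in>{2..b}. L i 2 \<le> L i 1"
    and L11_lt: "L 1 1 < Max ((\<lambda>i. L i 1) ` {1..b})"
    and "0 \<le> cov" and A_nonneg: "\<forall>i\<in>{1..b}. 0 \<le> c i + csh i" and "0 < c 1 + csh 1"
  shows "\<exists>p. prob_vec b p \<and> cost b cov c csh L p < cost b cov c csh L first_layer"
proof -
  define M where "M = Max ((\<lambda>i. L i 1) ` {1..b})"
  define A where "A = cov + (\<Sum>i=1..b. c i + csh i)"
  define q where "q = L 1 1 / M"
  define p where "p = first_two_layers q"
  have "1 \<le> b" using \<open>2 \<le> b\<close> by simp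
  have M_ge: "\<forall>i\<in>{1..b}. L i 1 \<le> M" unfolding M_def by (auto intro: Max_ge)
  have "0 < L 1 1" using L_pos \<open>1 \<le> b\<close> by auto
  then have "0 < M" "0 < q" "q < 1"
    using L11_lt unfolding q_def M_def by auto
  have den_ge: "1 / (2 * M) \<le> cost_den b L p"
    unfolding p_def using \<open>0 < M\<close> \<open>0 < q\<close> \<open>q < 1\<close> \<open>1 \<le> b\<close>
    by (intro cost_den_first_two_layers_ge[OF L_pos L_antimono M_ge]) (auto simp: q_def)
  moreover have "0 < 1 / (2 * M)" using \<open>0 < M\<close> by simp
  ultimately have den_pos: "0 < cost_den b L p" by linarith
  have num: "cost_num b cov c csh p = A - (1 - q) * (c 1 + csh 1)"
    unfolding p_def A_def using cost_num_first_two_layers[OF \<open>1 \<le> b\<close>] by simp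
  have "c 1 + csh 1 \<le> (\<Sum>i=1..b. c i + csh i)"
    using A_nonneg \<open>1 \<le> b\<close> by (intro member_le_sum) auto
  moreover have "(1 - q) * (c 1 + csh 1) \<le> c 1 + csh 1"
    using \<open>0 < q\<close> \<open>0 < c 1 + csh 1\<close> by (simp add: mult_left_le_one_le)
  ultimately have num_nonneg: "0 \<le> cost_num b cov c csh p"
    unfolding num A_def using \<open>0 \<le> cov\<close> by linarith
  have "cost_num b cov c csh p / cost_den b L p \<le> cost_num b cov c csh p / (1 / (2 * M))"
    using num_nonneg den_ge den_pos \<open>0 < M\<close> by (intro divide_left_mono) auto
  also have "\<dots> = 2 * M * A - 2 * M * ((1 - q) * (c 1 + csh 1))"
    unfolding num by (simp add: algebra_simps)
  also have "\<dots> < 2 * M * A"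
    using \<open>0 < M\<close> \<open>q < 1\<close> \<open>0 < c 1 + csh 1\<close> by simp
  finally have "cost b cov c csh L p < cost b cov c csh L first_layer"
    using den_pos cost_first_layer[OF \<open>1 \<le> b\<close>, of L cov c csh] L_pos
    unfolding cost_def A_def M_def by auto
  moreover have "prob_vec b p"
    unfolding p_def using \<open>2 \<le> b\<close> \<open>0 < q\<close> \<open>q < 1\<close> by (intro prob_vec_first_two_layers) auto
  ultimately show ?thesis by blast
qed

lemma first_layer_optimal_iff:
  assumes b: "1 \<le> b" and L_pos: "\<forall>i\<in>{1..b}. \<forall>s\<in>{1..i}. L i s > 0"
    and L_antimono: "\<forall>i\<in>{2..b}. L i 2 \<le> L i 1"
    and "0 \<le> cov" and A_pos: "\<forall>i\<in>{1..b}. 0 < c i + csh i"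
  shows "(\<forall>p. prob_vec b p \<longrightarrow> cost b cov c csh L first_layer \<le> cost b cov c csh L p)
    \<longleftrightarrow> L 1 1 = Max ((\<lambda>i. L i 1) ` {1..b})" (is "?optimal \<longleftrightarrow> L 1 1 = ?M")
proof
  have A_nonneg: "\<forall>i\<in>{1..b}. 0 \<le> c i + csh i" using A_pos by auto
  show "?optimal \<Longrightarrow> L 1 1 = ?M"
  proof (rule ccontr)
    assume ?optimal "L 1 1 \<noteq> ?M"
    moreover have "L 1 1 \<le> ?M" using b by (intro Max_ge) auto
    ultimately have "L 1 1 < ?M" by simp
    moreover from this have "2 \<le> b" using b by (cases "b = 1") auto
    ultimately obtain p where "prob_vec b p" "cost b cov c csh L p < cost b cov c csh L first_layer"
      using exists_cost_less_first_layer[OF _ L_pos L_antimono _ \<open>0 \<le> cov\<close> A_nonneg] A_pos b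
      by auto
    with \<open>?optimal\<close> show False by (simp add: not_le[symmetric])
  qed
  show "L 1 1 = ?M \<Longrightarrow> ?optimal"
    using first_layer_cost_le[OF b L_pos _ \<open>0 \<le> cov\<close> A_nonneg] by blast
qed

theorem theorem3:
  fixes f :: "real^'k::finite \<Rightarrow> real" and g :: "real^'k \<Rightarrow> real^'k"
    and blk :: "'k \<Rightarrow> nat" and N :: "nat \<Rightarrow> real^'k \<Rightarrow> real"
    and b :: nat and cov :: real and c csh :: "nat \<Rightarrow> real" and L :: "nat \<Rightarrow> nat \<Rightarrow> real"
  assumes b: "b \<ge> 1"
    and blk_range: "\<forall>k. blk k \<in> {1..b}"
    and blk_nonempty: "\<forall>i\<in>{1..b}. \<exists>k. blk k = i"
    and norms: "\<forall>i\<in>{1..b}. is_block_norm blk i (N i)"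
    and grad: "\<forall>X. (f has_derivative (\<lambda>h. g X \<bullet> h)) (at X)"
    and grad_cont: "continuous_on UNIV g"
    and Lsmooth: "layer_smoothness_consts f g blk N b L"
    and Lpos: "\<forall>i\<in>{1..b}. \<forall>s\<in>{1..i}. L i s > 0"
    and cov: "cov \<ge> 0"
    and cpos: "\<forall>i\<in>{1..b}. c i > 0"
    and cshnn: "\<forall>i\<in>{1..b}. csh i \<ge> 0"
  shows "(\<forall>p. prob_vec b p \<longrightarrow>
            cost b cov c csh L (\<lambda>s. if s = 1 then 1 else 0) \<le> cost b cov c csh L p)
         \<longleftrightarrow> L 1 1 = Max ((\<lambda>i. L i 1) ` {1..b})"
proof -
  have "\<forall>i\<in>{2..b}. L i 2 \<le> L i 1"
    using layer_smoothness_consts_antimono[OF Lsmooth, of 1] norms by (auto simp: numeral_2_eq_2)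
  moreover have "\<forall>i\<in>{1..b}. 0 < c i + csh i"
    using cpos cshnn by (simp add: add_pos_nonneg)
  ultimately show ?thesis
    using first_layer_optimal_iff[OF b Lpos _ cov] unfolding first_layer_def by blast
qed

end
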